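(* Let $H_1,H_2$ be Hermitian matrices and $f_1,f_2:[0,T]\to\mathbb{R}$ continuously differentiable, and let $U(t,s)$ be the propagator of $H(t)=f_1(t)H_1+f_2(t)H_2$. For $0<h\le T$ let $$U_{g,2}(h,0)=\exp\Big(-\mathrm{i}\int_{h/2}^{h}f_1(s)ds\,H_1\Big)\exp\Big(-\mathrm{i}\int_0^{h}f_2(s)ds\,H_2\Big)\exp\Big(-\mathrm{i}\int_0^{h/2}f_1(s)ds\,H_1\Big).$$ Then $$U_{g,2}(h,0)-U(h,0)=\int_0^h U(h,s)\exp\Big(-\mathrm{i}\int_{s/2}^s f_1(s')ds'H_1\Big)E_{g,2}(s)\exp\Big(-\mathrm{i}\int_0^s f_2(s')ds'H_2\Big)\exp\Big(-\mathrm{i}\int_0^{s/2}f_1(s')ds'H_1\Big)ds,$$ where $$\begin{aligned}E_{g,2}(h)&=-\frac{h}{2}f_1(0)\int_0^h f_2'(s)ds\,[H_1,H_2]+\frac{h}{4}f_2(0)\int_0^h f_1'(s/2)ds\,[H_1,H_2]\\&\quad-f_2(h)\int_0^h\Big(f_1'(s)-\tfrac14 f_1'(s/2)\Big)\Big(\exp\big(\operatorname{ad}_{\mathrm{i}\int_{s/2}^s f_1(s')ds'H_1}\big)[H_1,H_2]\Big)(h-s)ds\\&\quad+\frac12 f_1(h/2)\int_0^h f_2'(s)\Big(\exp\big(\operatorname{ad}_{-\mathrm{i}\int_0^s f_2(s')ds'H_2}\big)[H_1,H_2]\Big)(h-s)ds\\&\quad-\mathrm{i} f_2(h)\int_0^h\Big(f_1(s)-\tfrac12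 f_1(s/2)\Big)^2\Big(\exp\big(\operatorname{ad}_{\mathrm{i}\int_{s/2}^s f_1(s')ds'H_1}\big)[H_1,[H_1,H_2]]\Big)(h-s)ds\\&\quad+\frac{\mathrm{i}}{2}f_1(h/2)\int_0^h f_2^2(s)\Big(\exp\big(\operatorname{ad}_{-\mathrm{i}\int_0^s f_2(s')ds'H_2}\big)[H_2,[H_2,H_1]]\Big)(h-s)ds.\end{aligned}$$
   Context: $U(t,s)$ denotes the exact evolution operator: $\partial_t U(t,s)=-\mathrm{i} H(t)U(t,s)$, $U(s,s)=I$. For matrices $A,B$, $\operatorname{ad}_A(B)=[A,B]=AB-BA$ and $\exp(\operatorname{ad}_A)B=\exp(A)B\exp(-A)$. *)

theory Defs
  imports "HOL-Analysis.Analysis"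
begin

text \<open>Note that the ring operations * and ^ on vec are componentwise, so
matrix powers and the matrix exponential are defined explicitly.\<close>

fun matpow :: "complex^'n^'n \<Rightarrow> nat \<Rightarrow> complex^'n^'n" where
  "matpow A 0 = mat 1"
| "matpow A (Suc k) = A ** matpow A k"

definition mexp :: "complex^'n^'n \<Rightarrow> complex^'n^'n" where
  "mexp A = (\<Sum>k. (1 / fact k) *\<^sub>R matpow A k)"

definition csmult :: "complex \<Rightarrow> complex^'n^'n \<Rightarrow> complex^'n^'n" (infixr "*\<^sub>M" 75) where
  "c *\<^sub>M A = (\<chi> i j. c * A $ i $ j)"

definition hermitian :: "complex^'n^'n \<Rightarrow> bool" where
  "hermitian A \<longleftrightarrow> (\<forall>i j. A $ i $ j = cnj (A $ j $ i))"

definition commutator :: "complex^'n^'n \<Rightarrow> complex^'n^'n \<Rightarrow> complex^'n^'n" where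
  "commutator A B = A ** B - B ** A"

text \<open>exp(ad_A) B = exp(A) B exp(-A)\<close>
definition exp_ad :: "complex^'n^'n \<Rightarrow> complex^'n^'n \<Rightarrow> complex^'n^'n" where
  "exp_ad A B = mexp A ** B ** mexp (- A)"

text \<open>The error term E_{g,2}(h); f1', f2' are the derivatives of f1, f2.\<close>
definition Eg2 ::
  "complex^'n^'n \<Rightarrow> complex^'n^'n \<Rightarrow> (real \<Rightarrow> real) \<Rightarrow> (real \<Rightarrow> real) \<Rightarrow>
   (real \<Rightarrow> real) \<Rightarrow> (real \<Rightarrow> real) \<Rightarrow> real \<Rightarrow> complex^'n^'n" where
  "Eg2 H1 H2 f1 f2 f1' f2' h =
     complex_of_real (- (h/2) * f1 0 * integral {0..h} f2') *\<^sub>M commutator H1 H2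
   + complex_of_real ((h/4) * f2 0 * integral {0..h} (\<lambda>s. f1' (s/2))) *\<^sub>M commutator H1 H2
   - complex_of_real (f2 h) *\<^sub>M integral {0..h} (\<lambda>s.
        complex_of_real ((f1' s - f1' (s/2) / 4) * (h - s)) *\<^sub>M
        exp_ad ((\<i> * complex_of_real (integral {s/2..s} f1)) *\<^sub>M H1) (commutator H1 H2))
   + complex_of_real (f1 (h/2) / 2) *\<^sub>M integral {0..h} (\<lambda>s.
        complex_of_real (f2' s * (h - s)) *\<^sub>M
        exp_ad ((- \<i> * complex_of_real (integral {0..s} f2)) *\<^sub>M H2) (commutator H1 H2))
   - (\<i> * complex_of_real (f2 h)) *\<^sub>M integral {0..h} (\<lambda>s.
        complex_of_real ((f1 s - f1 (s/2) / 2)^2 * (h - s)) *\<^sub>M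
        exp_ad ((\<i> * complex_of_real (integral {s/2..s} f1)) *\<^sub>M H1)
          (commutator H1 (commutator H1 H2)))
   + (\<i> / 2 * complex_of_real (f1 (h/2))) *\<^sub>M integral {0..h} (\<lambda>s.
        complex_of_real ((f2 s)^2 * (h - s)) *\<^sub>M
        exp_ad ((- \<i> * complex_of_real (integral {0..s} f2)) *\<^sub>M H2)
          (commutator H2 (commutator H2 H1)))"

definition Ug2 ::
  "complex^'n^'n \<Rightarrow> complex^'n^'n \<Rightarrow> (real \<Rightarrow> real) \<Rightarrow> (real \<Rightarrow> real) \<Rightarrow> real \<Rightarrow> complex^'n^'n" where
  "Ug2 H1 H2 f1 f2 h =
     mexp ((- \<i> * complex_of_real (integral {h/2..h} f1)) *\<^sub>M H1)
  ** mexp ((- \<i> * complex_of_real (integral {0..h} f2)) *\<^sub>M H2)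
  ** mexp ((- \<i> * complex_of_real (integral {0..h/2} f1)) *\<^sub>M H1)"

end

theory Submission
  imports Defs
begin

text \<open>
  Put K1 = -i H1, K2 = -i H2 and write the splitting as V(x) = exp(a(x) K1) exp(b(x) K2) exp(c(x) K1),
  where a, b, c are the three integrals in U_{g,2}. Then V' = G V + exp(a K1) D exp(b K2) exp(c K1)
  with G(t) = -i H(t) and a defect D built from Ad_{exp(b K2)} K1 - K1 and K2 - Ad_{exp(-a K1)} K2.
  Since G is skew-adjoint, the propagator is unitary and U(t,s) U(s,r) = U(t,r), so Duhamel's
  formula gives V(h) - U(h,0) = integral over [0,h] of U(h,s) (V' - G V)(s). Expanding both
  conjugations to second order with integral remainder, each derivative contributing one more
  commutator, identifies D with E_{g,2}.
\<close>

section \<open>Complex matrices as a Banach algebra\<close>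

text \<open>On \<open>complex^'n^'n\<close> the product \<open>*\<close> is componentwise, so the matrix algebra gets its own
  type, with the matrix product and the operator norm; the library's \<open>exp\<close> then applies.\<close>

typedef (overloaded) ('n::finite) cmat = "UNIV :: (complex^'n^'n) set"
  by simp

setup_lifting type_definition_cmat

lemma matrix_add_rdistrib: "(B + C) ** A = B ** A + C ** A"
  for A B C :: "'a::semiring_1^'n^'n"
  by (vector matrix_matrix_mult_def sum.distrib[symmetric] field_simps)

instantiation cmat :: (finite) ring_1
begin
lift_definition zero_cmat :: "'a cmat" is 0 .
lift_definition one_cmat :: "'a cmat" is "mat 1" .
lift_definition plus_cmat :: "'a cmat \<Rightarrow> 'a cmat \<Rightarrow> 'a cmat" is "(+)" .
lift_definition minus_cmat :: "'a cmat \<Rightarrow> 'a cmat \<Rightarrow> 'a cmat" is "(-)" .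
lift_definition uminus_cmat :: "'a cmat \<Rightarrow> 'a cmat" is uminus .
lift_definition times_cmat :: "'a cmat \<Rightarrow> 'a cmat \<Rightarrow> 'a cmat" is "(**)" .
instance
proof
  fix a b c :: "'a cmat"
  show "a * b * c = a * (b * c)" by transfer (simp add: matrix_mul_assoc)
  show "(a + b) * c = a * c + b * c" by transfer (rule matrix_add_rdistrib)
  show "a * (b + c) = a * b + a * c" by transfer (rule matrix_add_ldistrib)
  show "1 * a = a" by transfer simp
  show "a * 1 = a" by transfer simp
  show "a + b + c = a + (b + c)" by transfer (rule add.assoc)
  show "a + b = b + a" by transfer (rule add.commute)
  show "0 + a = a" by transfer simp
  show "- a + a = 0" by transfer simp
  show "a - b = a + - b" by transfer simp
  show "(0::'a cmat) \<noteq> 1" by transfer (simp add: vec_eq_iff mat_def)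
qed
end

instantiation cmat :: (finite) real_normed_vector
begin
lift_definition scaleR_cmat :: "real \<Rightarrow> 'a cmat \<Rightarrow> 'a cmat" is scaleR .
lift_definition norm_cmat :: "'a cmat \<Rightarrow> real" is "\<lambda>A. onorm ((*v) A)" .
definition dist_cmat :: "'a cmat \<Rightarrow> 'a cmat \<Rightarrow> real" where "dist_cmat A B = norm (A - B)"
definition sgn_cmat :: "'a cmat \<Rightarrow> 'a cmat" where "sgn_cmat A = inverse (norm A) *\<^sub>R A"
definition uniformity_cmat :: "('a cmat \<times> 'a cmat) filter" where
  "uniformity_cmat = (INF e\<in>{0<..}. principal {(A, B). dist A B < e})"
definition open_cmat :: "'a cmat set \<Rightarrow> bool" where
  "open_cmat S = (\<forall>A\<in>S. \<forall>\<^sub>F (A', B) in uniformity. A' = A \<longrightarrow> B \<in> S)"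
instance
proof
  fix a b :: real and A B :: "'a cmat"
  show "a *\<^sub>R (A + B) = a *\<^sub>R A + a *\<^sub>R B" by transfer (rule scaleR_right_distrib)
  show "(a + b) *\<^sub>R A = a *\<^sub>R A + b *\<^sub>R A" by transfer (rule scaleR_left_distrib)
  show "a *\<^sub>R b *\<^sub>R A = (a * b) *\<^sub>R A" by transfer simp
  show "1 *\<^sub>R A = A" by transfer simp
  show "norm A = 0 \<longleftrightarrow> A = 0"
    by transfer (simp add: onorm_eq_0 matrix_eq)
  show "norm (A + B) \<le> norm A + norm B"
  proof transfer
    fix A B :: "complex^'a^'a"
    have "(*v) (A + B) = (\<lambda>x. A *v x + B *v x)"
      by (simp add: fun_eq_iff matrix_vector_mult_add_rdistrib)
    then show "onorm ((*v) (A + B)) \<le> onorm ((*v) A) + onorm ((*v) B)"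
      by (simp add: onorm_triangle)
  qed
  show "norm (a *\<^sub>R A) = \<bar>a\<bar> * norm A"
  proof transfer
    fix a and A :: "complex^'a^'a"
    have "(*v) (a *\<^sub>R A) = (\<lambda>x. a *\<^sub>R (A *v x))"
      by (simp add: fun_eq_iff vec_eq_iff matrix_vector_mult_def scaleR_sum_right)
    then show "onorm ((*v) (a *\<^sub>R A)) = \<bar>a\<bar> * onorm ((*v) A)"
      by (simp add: onorm_scaleR)
  qed
qed (simp_all add: dist_cmat_def sgn_cmat_def uniformity_cmat_def open_cmat_def)
end

instance cmat :: (finite) real_normed_algebra_1
proof
  fix a :: real and A B :: "'a cmat"
  show "a *\<^sub>R A * B = a *\<^sub>R (A * B)" by transfer (simp add: scalar_matrix_assoc)
  show "A * a *\<^sub>R B = a *\<^sub>R (A * B)" by transfer (simp add: matrix_scalar_ac scalar_matrix_assoc)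
  show "norm (A * B) \<le> norm A * norm B"
  proof transfer
    fix A B :: "complex^'a^'a"
    have "(*v) (A ** B) = (*v) A \<circ> (*v) B"
      by (simp add: fun_eq_iff matrix_vector_mul_assoc)
    then show "onorm ((*v) (A ** B)) \<le> onorm ((*v) A) * onorm ((*v) B)"
      by (simp add: onorm_compose)
  qed
  have "(*v) (mat 1 :: complex^'a^'a) = (\<lambda>x. x)"
    by (simp add: fun_eq_iff)
  then show "norm (1::'a cmat) = 1"
    by transfer (simp add: onorm_id)
qed

lemma norm_vec_le_sum: "norm x \<le> (\<Sum>i\<in>UNIV. norm (x $ i))"
  by (simp add: norm_vec_def L2_set_le_sum)

lemma cmat_entry_le_norm: "cmod (Rep_cmat A $ i $ j) \<le> norm A"
proof -
  have "Rep_cmat A $ i $ j = (Rep_cmat A *v axis j 1) $ i"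
    by (simp add: matrix_vector_mult_def axis_def if_distrib[where f = "\<lambda>c. _ * c"] cong: if_cong)
  also have "cmod \<dots> \<le> norm (Rep_cmat A *v axis j 1)"
    by (rule Finite_Cartesian_Product.norm_nth_le)
  also have "\<dots> \<le> onorm ((*v) (Rep_cmat A))"
    using onorm[OF matrix_vector_mul_bounded_linear, of "Rep_cmat A" "axis j 1"] by simp
  finally show ?thesis
    by (simp add: norm_cmat.rep_eq)
qed

lemma norm_cmat_le_entries:
  fixes A :: "'n::finite cmat"
  assumes "\<And>i j. cmod (Rep_cmat A $ i $ j) \<le> b"
  shows "norm A \<le> real CARD('n) ^ 2 * b"
  unfolding norm_cmat.rep_eq
proof (rule onorm_le)
  fix x :: "complex^'n"
  have "norm (Rep_cmat A *v x) \<le> (\<Sum>i\<in>UNIV. cmod ((Rep_cmat A *v x) $ i))"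
    by (rule norm_vec_le_sum)
  also have "\<dots> \<le> (\<Sum>i\<in>(UNIV::'n set). \<Sum>j\<in>(UNIV::'n set). b * norm x)"
  proof (rule sum_mono)
    fix i
    have "cmod ((Rep_cmat A *v x) $ i) \<le> (\<Sum>j\<in>UNIV. cmod (Rep_cmat A $ i $ j) * cmod (x $ j))"
      unfolding matrix_vector_mult_def by (simp add: order.trans[OF norm_sum] norm_mult)
    also have "\<dots> \<le> (\<Sum>j\<in>(UNIV::'n set). b * norm x)"
      by (rule sum_mono, rule mult_mono)
        (auto intro: assms Finite_Cartesian_Product.norm_nth_le order.trans[OF norm_ge_zero assms])
    finally show "cmod ((Rep_cmat A *v x) $ i) \<le> (\<Sum>j\<in>(UNIV::'n set). b * norm x)" .
  qed
  finally show "norm (Rep_cmat A *v x) \<le> real CARD('n) ^ 2 * b * norm x"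
    by (simp add: power2_eq_square)
qed

lemma norm_Rep_cmat_le: "norm (Rep_cmat A) \<le> norm A * real CARD('n) ^ 2"
  for A :: "'n::finite cmat"
proof -
  have "norm (Rep_cmat A) \<le> (\<Sum>i\<in>(UNIV::'n set). \<Sum>j\<in>(UNIV::'n set). norm A)"
    by (rule order.trans[OF norm_vec_le_sum])
       (intro sum_mono order.trans[OF norm_vec_le_sum] cmat_entry_le_norm)
  then show ?thesis
    by (simp add: power2_eq_square mult_ac)
qed

lemma bounded_linear_Rep_cmat: "bounded_linear (Rep_cmat :: 'n::finite cmat \<Rightarrow> _)"
  by (rule bounded_linear_intro[where K = "real CARD('n) ^ 2"])
     (simp_all add: plus_cmat.rep_eq scaleR_cmat.rep_eq norm_Rep_cmat_le)

lemma bounded_linear_Abs_cmat: "bounded_linear (Abs_cmat :: complex^'n^'n \<Rightarrow> 'n::finite cmat)"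
proof (rule bounded_linear_intro[where K = "real CARD('n) ^ 2"])
  fix M :: "complex^'n^'n"
  have "cmod (Rep_cmat (Abs_cmat M) $ i $ j) \<le> norm M" for i j
    using Finite_Cartesian_Product.norm_nth_le[where x = "M $ i" and i = j]
      Finite_Cartesian_Product.norm_nth_le[where x = M and i = i]
    by (simp add: Abs_cmat_inverse)
  then show "norm (Abs_cmat M) \<le> norm M * real CARD('n) ^ 2"
    by (subst mult.commute) (rule norm_cmat_le_entries)
qed (simp_all add: plus_cmat_def scaleR_cmat_def Abs_cmat_inverse)

instance cmat :: (finite) banach
proof
  fix X :: "nat \<Rightarrow> 'a cmat"
  assume "Cauchy X"
  then have "Cauchy (\<lambda>k. Rep_cmat (X k))"
    by (rule bounded_linear.Cauchy[OF bounded_linear_Rep_cmat])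
  then obtain L where "(\<lambda>k. Rep_cmat (X k)) \<longlonglongrightarrow> L"
    using convergent_def Cauchy_convergent_iff by blast
  then have "(\<lambda>k. Abs_cmat (Rep_cmat (X k))) \<longlonglongrightarrow> Abs_cmat L"
    by (rule bounded_linear.tendsto[OF bounded_linear_Abs_cmat])
  then show "convergent X"
    by (auto simp: convergent_def Rep_cmat_inverse)
qed

section \<open>Conjugation by exponentials in a Banach algebra\<close>

definition bracket :: "'a::ring \<Rightarrow> 'a \<Rightarrow> 'a" where
  "bracket A B = A * B - B * A"

lemma bracket_minus_left [simp]: "bracket (- A) B = - bracket A B"
  by (simp add: bracket_def)

lemma bracket_minus_right [simp]: "bracket A (- B) = - bracket A B"
  by (simp add: bracket_def)

lemma bracket_swap: "bracket B A = - bracket A B"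
  by (simp add: bracket_def)

definition Ad :: "'a::{real_normed_algebra_1,banach} \<Rightarrow> 'a \<Rightarrow> 'a" where
  "Ad A N = exp A * N * exp (- A)"

lemma Ad_0 [simp]: "Ad 0 N = N"
  by (simp add: Ad_def)

lemma Ad_minus_right: "Ad A (- N) = - Ad A N"
  by (simp add: Ad_def)

lemma has_vector_derivative_exp_scaleR:
  fixes K :: "'a::{real_normed_algebra_1,banach}"
  assumes "(\<phi> has_real_derivative d) (at u within S)"
  shows "((\<lambda>u. exp (\<phi> u *\<^sub>R K)) has_vector_derivative d *\<^sub>R (K * exp (\<phi> u *\<^sub>R K))) (at u within S)"
  using vector_diff_chain_within[OF assms[unfolded has_real_derivative_iff_has_vector_derivative]
      has_vector_derivative_at_within[OF exp_scaleR_has_vector_derivative_left]]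
  by (simp add: o_def)

lemma has_vector_derivative_Ad:
  fixes K N :: "'a::{real_normed_algebra_1,banach}"
  assumes "(\<phi> has_real_derivative d) (at u within S)"
  shows "((\<lambda>u. Ad (\<phi> u *\<^sub>R K) N) has_vector_derivative d *\<^sub>R Ad (\<phi> u *\<^sub>R K) (bracket K N))
    (at u within S)"
proof -
  have minus: "((\<lambda>u. - \<phi> u) has_real_derivative - d) (at u within S)"
    using assms by (rule derivative_intros)
  let ?E = "exp (\<phi> u *\<^sub>R K)" and ?F = "exp ((- \<phi> u) *\<^sub>R K)"
  have "((\<lambda>u. exp (\<phi> u *\<^sub>R K) * N * exp ((- \<phi> u) *\<^sub>R K)) has_vector_derivative
      ?E * N * ((- d) *\<^sub>R (K * ?F)) + d *\<^sub>R (K * ?E) * N * ?F) (at u within S)"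
    by (intro has_vector_derivative_mult has_vector_derivative_mult_left
        has_vector_derivative_exp_scaleR assms minus)
  moreover have "K * (?E * Z) = ?E * (K * Z)" "K * (?F * Z) = ?F * (K * Z)" for Z
    by (metis mult.assoc exp_times_scaleR_commute)+
  then have "?E * N * ((- d) *\<^sub>R (K * ?F)) + d *\<^sub>R (K * ?E) * N * ?F
      = d *\<^sub>R Ad (\<phi> u *\<^sub>R K) (bracket K N)"
    by (simp add: Ad_def bracket_def algebra_simps)
  ultimately show ?thesis
    by (simp add: Ad_def)
qed

lemma continuous_on_exp_scaleR:
  fixes K :: "'a::{real_normed_algebra_1,banach}"
  assumes "continuous_on S \<phi>"
  shows "continuous_on S (\<lambda>u. exp (\<phi> u *\<^sub>R K))"
proof -
  have "continuous_on UNIV (\<lambda>t. exp (t *\<^sub>R K))"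
    by (rule continuous_on_vector_derivative) (rule exp_scaleR_has_vector_derivative_right)
  then show ?thesis
    by (rule continuous_on_compose2[OF _ assms]) auto
qed

lemma continuous_on_Ad:
  fixes K N :: "'a::{real_normed_algebra_1,banach}"
  assumes "continuous_on S \<phi>"
  shows "continuous_on S (\<lambda>u. Ad (\<phi> u *\<^sub>R K) N)"
proof -
  have "continuous_on S (\<lambda>u. exp ((- \<phi> u) *\<^sub>R K))"
    using assms by (intro continuous_on_exp_scaleR continuous_intros)
  then show ?thesis
    unfolding Ad_def using continuous_on_exp_scaleR[OF assms]
    by (auto intro!: continuous_intros)
qed

lemma Ad_taylor_expansion:
  fixes K N :: "'a::{real_normed_algebra_1,banach}"
  assumes "0 \<le> x"
    and \<phi>: "\<And>u. u \<in> {0..x} \<Longrightarrow> (\<phi> has_real_derivative \<phi>' u) (at u within {0..x})"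
    and \<phi>': "\<And>u. u \<in> {0..x} \<Longrightarrow> (\<phi>' has_real_derivative \<phi>'' u) (at u within {0..x})"
    and "continuous_on {0..x} \<phi>''"
    and "\<phi> 0 = 0"
  shows "Ad (\<phi> x *\<^sub>R K) N = N + (x * \<phi>' 0) *\<^sub>R bracket K N
    + integral {0..x} (\<lambda>u. (\<phi>'' u * (x - u)) *\<^sub>R Ad (\<phi> u *\<^sub>R K) (bracket K N))
    + integral {0..x} (\<lambda>u. (\<phi>' u ^ 2 * (x - u)) *\<^sub>R Ad (\<phi> u *\<^sub>R K) (bracket K (bracket K N)))"
proof -
  let ?G = "\<lambda>u. Ad (\<phi> u *\<^sub>R K) N"
  let ?G1 = "\<lambda>u. \<phi>' u *\<^sub>R Ad (\<phi> u *\<^sub>R K) (bracket K N)"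
  let ?G2 = "\<lambda>u. \<phi>'' u *\<^sub>R Ad (\<phi> u *\<^sub>R K) (bracket K N)
    + \<phi>' u *\<^sub>R (\<phi>' u *\<^sub>R Ad (\<phi> u *\<^sub>R K) (bracket K (bracket K N)))"
  have "(?G has_vector_derivative ?G1 u) (at u within {0..x})" if "u \<in> {0..x}" for u
    by (rule has_vector_derivative_Ad[OF \<phi>[OF that]])
  moreover have "(?G1 has_vector_derivative ?G2 u) (at u within {0..x})" if "u \<in> {0..x}" for u
    using has_vector_derivative_scaleR[OF \<phi>'[OF that] has_vector_derivative_Ad[OF \<phi>[OF that]]]
    by (simp add: add.commute)
  ultimately have taylor: "?G x = (\<Sum>i<2. ((x - 0) ^ i / fact i) *\<^sub>R ([?G, ?G1, ?G2] ! i) 0)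
      + integral {0..x} (\<lambda>u. ((x - u) ^ (2 - 1) / fact (2 - 1)) *\<^sub>R ([?G, ?G1, ?G2] ! 2) u)"
    by (intro Taylor_integral[where Df = "(!) [?G, ?G1, ?G2]"])
       (auto simp: less_2_cases_iff \<open>0 \<le> x\<close>)
  have "continuous_on {0..x} \<phi>"
    by (rule DERIV_continuous_on[OF \<phi>])
  moreover have "continuous_on {0..x} \<phi>'"
    by (rule DERIV_continuous_on[OF \<phi>'])
  ultimately have "continuous_on {0..x} (\<lambda>u. (\<phi>'' u * (x - u)) *\<^sub>R Ad (\<phi> u *\<^sub>R K) (bracket K N))"
      "continuous_on {0..x} (\<lambda>u. (\<phi>' u ^ 2 * (x - u)) *\<^sub>R Ad (\<phi> u *\<^sub>R K) (bracket K (bracket K N)))"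
    using assms(4) by (auto intro!: continuous_intros continuous_on_Ad)
  then have "integral {0..x} (\<lambda>u. ((x - u) ^ (2 - 1) / fact (2 - 1)) *\<^sub>R ([?G, ?G1, ?G2] ! 2) u)
      = integral {0..x} (\<lambda>u. (\<phi>'' u * (x - u)) *\<^sub>R Ad (\<phi> u *\<^sub>R K) (bracket K N))
      + integral {0..x} (\<lambda>u. (\<phi>' u ^ 2 * (x - u)) *\<^sub>R Ad (\<phi> u *\<^sub>R K) (bracket K (bracket K N)))"
    by (simp add: integral_add[symmetric] integrable_continuous_interval power2_eq_square
        algebra_simps)
  with taylor show ?thesis
    by (simp add: \<open>\<phi> 0 = 0\<close> numeral_2_eq_2)
qed

lemma has_vector_derivative_symmetric_exp_product:
  fixes K L :: "'a::{real_normed_algebra_1,banach}"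
  assumes a: "(a has_real_derivative a') (at x within S)"
    and b: "(b has_real_derivative b') (at x within S)"
    and c: "(c has_real_derivative c') (at x within S)"
  defines "V \<equiv> \<lambda>x. exp (a x *\<^sub>R K) * exp (b x *\<^sub>R L) * exp (c x *\<^sub>R K)"
  shows "(V has_vector_derivative ((a' + c') *\<^sub>R K + b' *\<^sub>R L) * V x
      + exp (a x *\<^sub>R K) * (c' *\<^sub>R (Ad (b x *\<^sub>R L) K - K) + b' *\<^sub>R (L - Ad (- (a x *\<^sub>R K)) L))
        * exp (b x *\<^sub>R L) * exp (c x *\<^sub>R K)) (at x within S)"
proof -
  let ?A = "exp (a x *\<^sub>R K)" and ?A' = "exp (- (a x *\<^sub>R K))"
  let ?B = "exp (b x *\<^sub>R L)" and ?B' = "exp (- (b x *\<^sub>R L))"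
  let ?C = "exp (c x *\<^sub>R K)"
  have "(V has_vector_derivative ?A * ?B * (c' *\<^sub>R (K * ?C))
      + (?A * (b' *\<^sub>R (L * ?B)) + a' *\<^sub>R (K * ?A) * ?B) * ?C) (at x within S)"
    unfolding V_def by (intro has_vector_derivative_mult has_vector_derivative_exp_scaleR a b c)
  moreover have "?A * (?A' * Z) = Z" "?B' * (?B * Z) = Z" "K * (?A * Z) = ?A * (K * Z)" for Z
    using exp_minus_inverse[of "- (b x *\<^sub>R L)"]
    by (simp_all add: mult.assoc[symmetric] exp_minus_inverse exp_times_scaleR_commute)
  then have "?A * ?B * (c' *\<^sub>R (K * ?C)) + (?A * (b' *\<^sub>R (L * ?B)) + a' *\<^sub>R (K * ?A) * ?B) * ?C
      = ((a' + c') *\<^sub>R K + b' *\<^sub>R L) * V x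
        + ?A * (c' *\<^sub>R (Ad (b x *\<^sub>R L) K - K) + b' *\<^sub>R (L - Ad (- (a x *\<^sub>R K)) L)) * ?B * ?C"
    by (simp add: V_def Ad_def algebra_simps exp_times_scaleR_commute)
  ultimately show ?thesis
    by simp
qed

section \<open>Complex scaling, adjoints and the embedding of matrices\<close>

lift_definition cscale :: "complex \<Rightarrow> 'n::finite cmat \<Rightarrow> 'n cmat" (infixr "*\<^sub>C" 75)
  is csmult .

lemma cscale_mult_left [simp]: "(c *\<^sub>C A) * B = c *\<^sub>C (A * B)"
  by transfer (simp add: csmult_def matrix_matrix_mult_def vec_eq_iff sum_distrib_left mult.assoc)

lemma cscale_mult_right [simp]: "A * (c *\<^sub>C B) = c *\<^sub>C (A * B)"
  by transfer (simp add: csmult_def matrix_matrix_mult_def vec_eq_iff sum_distrib_left mult_ac)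

lemma cscale_cscale [simp]: "c *\<^sub>C d *\<^sub>C A = (c * d) *\<^sub>C A"
  by transfer (simp add: csmult_def vec_eq_iff)

lemma cscale_of_real [simp]: "of_real r *\<^sub>C A = r *\<^sub>R A"
  by transfer (simp add: csmult_def vec_eq_iff scaleR_conv_of_real[where 'a = complex])

lemma cscale_zero_left [simp]: "0 *\<^sub>C A = 0"
  using cscale_of_real[of 0] by simp

lemma cscale_one [simp]: "1 *\<^sub>C A = A"
  using cscale_of_real[of 1] by simp

lemma cscale_scaleR [simp]: "c *\<^sub>C (r *\<^sub>R A) = r *\<^sub>R (c *\<^sub>C A)"
  by transfer (simp add: csmult_def vec_eq_iff scaleR_conv_of_real[where 'a = complex])

lemma cscale_mult_of_real [simp]: "(c * of_real r) *\<^sub>C A = c *\<^sub>C (r *\<^sub>R A)"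
  by (metis cscale_cscale cscale_of_real)

lemma cscale_add_right: "c *\<^sub>C (A + B) = c *\<^sub>C A + c *\<^sub>C B"
  by transfer (simp add: csmult_def vec_eq_iff algebra_simps)

lemma cscale_diff_right: "c *\<^sub>C (A - B) = c *\<^sub>C A - c *\<^sub>C B"
  by transfer (simp add: csmult_def vec_eq_iff algebra_simps)

lemma cscale_minus_right [simp]: "c *\<^sub>C (- A) = - (c *\<^sub>C A)"
  by transfer (simp add: csmult_def vec_eq_iff)

lemma cscale_minus_left [simp]: "(- c) *\<^sub>C A = - (c *\<^sub>C A)"
  by transfer (simp add: csmult_def vec_eq_iff)

lemma bounded_linear_cscale: "bounded_linear (cscale c :: 'n::finite cmat \<Rightarrow> _)"
proof -
  have "cscale c = (\<lambda>A. (c *\<^sub>C 1) * A)"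
    by simp
  then show ?thesis
    by (metis bounded_linear_mult_right)
qed

lemma integral_bounded_linear_inverse:
  assumes f: "bounded_linear f" and g: "bounded_linear g" and inv: "\<And>x. g (f x) = x"
  shows "integral S (\<lambda>u. f (F u)) = f (integral S F)"
proof (cases "F integrable_on S")
  case True
  then show ?thesis
    using integral_linear[OF True f] by (simp add: o_def)
next
  case False
  have "\<not> (\<lambda>u. f (F u)) integrable_on S"
  proof
    assume "(\<lambda>u. f (F u)) integrable_on S"
    from integrable_linear[OF this g] have "F integrable_on S"
      by (simp add: o_def inv)
    with False show False ..
  qed
  then show ?thesis
    using False by (simp add: not_integrable_integral linear_simps(3)[OF f])
qed

lemma integral_cscale: "integral S (\<lambda>u. c *\<^sub>C F u) = c *\<^sub>C integral S F"
proof (cases "c = 0")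
  case True
  then show ?thesis
    by simp
next
  case False
  then show ?thesis
    by (intro integral_bounded_linear_inverse[where g = "cscale (inverse c)"] bounded_linear_cscale)
       simp
qed

lemma integral_scaleR_cscale [simp]:
  "integral S (\<lambda>u. r u *\<^sub>R (c *\<^sub>C F u)) = c *\<^sub>C integral S (\<lambda>u. r u *\<^sub>R F u)"
  by (simp add: integral_cscale[symmetric])

lemma bracket_cscale_left [simp]: "bracket (c *\<^sub>C A) B = c *\<^sub>C bracket A B"
  by (simp add: bracket_def cscale_diff_right)

lemma bracket_cscale_right [simp]: "bracket A (c *\<^sub>C B) = c *\<^sub>C bracket A B"
  by (simp add: bracket_def cscale_diff_right)

lemma Ad_cscale_right [simp]: "Ad A (c *\<^sub>C N) = c *\<^sub>C Ad A N"
  by (simp add: Ad_def)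

lift_definition adj :: "'n::finite cmat \<Rightarrow> 'n cmat"
  is "\<lambda>A. \<chi> i j. cnj (A $ j $ i)" .

lemma adj_mult: "adj (A * B) = adj B * adj A"
  by transfer (simp add: matrix_matrix_mult_def vec_eq_iff mult_ac)

lemma adj_add: "adj (A + B) = adj A + adj B"
  by transfer (simp add: vec_eq_iff)

lemma adj_scaleR: "adj (r *\<^sub>R A) = r *\<^sub>R adj A"
  by transfer (simp add: vec_eq_iff)

lemma adj_cscale: "adj (c *\<^sub>C A) = cnj c *\<^sub>C adj A"
  by transfer (simp add: vec_eq_iff csmult_def)

lemma adj_uminus: "adj (- A) = - adj A"
  by transfer (simp add: vec_eq_iff)

lemma adj_diff: "adj (A - B) = adj A - adj B"
  by transfer (simp add: vec_eq_iff)

lemma adj_one: "adj 1 = 1"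
  by transfer (simp add: vec_eq_iff mat_def)

lemma adj_Abs_cmat:
  assumes "hermitian H"
  shows "adj (Abs_cmat H) = Abs_cmat H"
proof -
  have "cnj (H $ j $ i) = H $ i $ j" for i j
    using assms unfolding hermitian_def by (metis complex_cnj_cnj)
  then show ?thesis
    by (simp add: Rep_cmat_inject[symmetric] adj.rep_eq Abs_cmat_inverse vec_eq_iff)
qed

lemma bounded_linear_adj: "bounded_linear (adj :: 'n::finite cmat \<Rightarrow> _)"
proof (rule bounded_linear_intro[where K = "real CARD('n) ^ 2"])
  fix A :: "'n cmat"
  have "cmod (Rep_cmat (adj A) $ i $ j) \<le> norm A" for i j
    using cmat_entry_le_norm[of A j i] by (simp add: adj.rep_eq)
  then show "norm (adj A) \<le> norm A * real CARD('n) ^ 2"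
    by (subst mult.commute) (rule norm_cmat_le_entries)
qed (simp_all add: adj_add adj_scaleR)

lemma adj_mult_self_eq_0: "adj A * A = 0 \<Longrightarrow> A = 0"
proof transfer
  fix A :: "complex^'n^'n"
  assume "(\<chi> i j. cnj (A $ j $ i)) ** A = 0"
  then have "(\<Sum>i\<in>UNIV. cnj (A $ i $ j) * A $ i $ j) = 0" for j
    by (simp add: matrix_matrix_mult_def vec_eq_iff)
  moreover have "cnj z * z = of_real ((cmod z)\<^sup>2)" for z
    using complex_norm_square[of z] by (simp add: mult.commute)
  ultimately have "of_real (\<Sum>i\<in>UNIV. (cmod (A $ i $ j))\<^sup>2) = (0::complex)" for j
    by simp
  then show "A = 0"
    by (simp add: vec_eq_iff sum_nonneg_eq_0_iff del: of_real_sum)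
qed

lemma adj_mult_self_eq_1: "adj A * A = 1 \<Longrightarrow> A * adj A = 1"
  by transfer (rule matrix_left_right_inverse[THEN iffD1])

lemma Rep_cmat_eq_iff: "Rep_cmat A = M \<longleftrightarrow> A = Abs_cmat M"
  by (metis Abs_cmat_inverse Rep_cmat_inverse UNIV_I)

lemma Abs_cmat_mult: "Abs_cmat (A ** B) = Abs_cmat A * Abs_cmat B"
  by (simp add: times_cmat.abs_eq)

lemma Abs_cmat_add: "Abs_cmat (A + B) = Abs_cmat A + Abs_cmat B"
  by (simp add: plus_cmat.abs_eq)

lemma Abs_cmat_diff: "Abs_cmat (A - B) = Abs_cmat A - Abs_cmat B"
  by (simp add: minus_cmat.abs_eq)

lemma Abs_cmat_uminus: "Abs_cmat (- A) = - Abs_cmat A"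
  by (simp add: uminus_cmat.abs_eq)

lemma Abs_cmat_scaleR: "Abs_cmat (r *\<^sub>R A) = r *\<^sub>R Abs_cmat A"
  by (simp add: scaleR_cmat.abs_eq)

lemma Abs_cmat_csmult: "Abs_cmat (c *\<^sub>M A) = c *\<^sub>C Abs_cmat A"
  by (simp add: cscale.abs_eq)

lemma Abs_cmat_one: "Abs_cmat (mat 1) = 1"
  by (simp add: one_cmat_def)

lemma Abs_cmat_commutator: "Abs_cmat (commutator A B) = bracket (Abs_cmat A) (Abs_cmat B)"
  by (simp add: commutator_def bracket_def Abs_cmat_diff Abs_cmat_mult)

lemma Rep_cmat_power: "Rep_cmat (A ^ k) = matpow (Rep_cmat A) k"
  by (induction k) (simp_all add: one_cmat.rep_eq times_cmat.rep_eq)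

lemma Rep_cmat_exp: "Rep_cmat (exp A) = mexp (Rep_cmat A)"
proof -
  have "Rep_cmat (exp A) = Rep_cmat (\<Sum>k. A ^ k /\<^sub>R fact k)"
    by (simp add: exp_def)
  also have "\<dots> = (\<Sum>k. Rep_cmat (A ^ k /\<^sub>R fact k))"
    by (rule bounded_linear.suminf[OF bounded_linear_Rep_cmat summable_exp_generic])
  also have "\<dots> = mexp (Rep_cmat A)"
    by (simp add: mexp_def Rep_cmat_power scaleR_cmat.rep_eq divide_inverse_commute)
  finally show ?thesis .
qed

lemma Abs_cmat_mexp: "Abs_cmat (mexp A) = exp (Abs_cmat A)"
  using Rep_cmat_exp[of "Abs_cmat A"] by (simp add: Rep_cmat_eq_iff Abs_cmat_inverse)

lemma Abs_cmat_exp_ad: "Abs_cmat (exp_ad A B) = Ad (Abs_cmat A) (Abs_cmat B)"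
  by (simp add: exp_ad_def Ad_def Abs_cmat_mult Abs_cmat_mexp Abs_cmat_uminus)

lemma Abs_cmat_integral: "Abs_cmat (integral S F) = integral S (\<lambda>u. Abs_cmat (F u))"
  by (rule integral_bounded_linear_inverse[symmetric, OF bounded_linear_Abs_cmat bounded_linear_Rep_cmat])
     (simp add: Abs_cmat_inverse)

lemmas Abs_cmat_simps = Abs_cmat_mult Abs_cmat_add Abs_cmat_diff Abs_cmat_uminus Abs_cmat_scaleR
  Abs_cmat_csmult Abs_cmat_one Abs_cmat_commutator Abs_cmat_mexp Abs_cmat_exp_ad Abs_cmat_integral

section \<open>Unitary propagators and Duhamel's formula\<close>

locale unitary_propagator =
  fixes G :: "real \<Rightarrow> 'n::finite cmat" and T :: real and U :: "real \<Rightarrow> real \<Rightarrow> 'n cmat"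
  assumes skew_adjoint: "\<And>t. t \<in> {0..T} \<Longrightarrow> adj (G t) = - G t"
    and propagator_derivative: "\<And>t s. t \<in> {0..T} \<Longrightarrow> s \<in> {0..T} \<Longrightarrow>
      ((\<lambda>\<tau>. U \<tau> s) has_vector_derivative G t * U t s) (at t within {0..T})"
    and propagator_diagonal: "\<And>s. s \<in> {0..T} \<Longrightarrow> U s s = 1"
begin

lemma gram_constant:
  assumes Y: "\<And>t. t \<in> {0..T} \<Longrightarrow> (Y has_vector_derivative G t * Y t) (at t within {0..T})"
    and "t \<in> {0..T}" "s \<in> {0..T}"
  shows "adj (Y t) * Y t = adj (Y s) * Y s"
proof -
  have "((\<lambda>t. adj (Y t) * Y t) has_derivative (\<lambda>_. 0)) (at x within {0..T})"
    if x: "x \<in> {0..T}" for x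
  proof -
    have "((\<lambda>t. adj (Y t) * Y t) has_vector_derivative
        adj (Y x) * (G x * Y x) + adj (G x * Y x) * Y x) (at x within {0..T})"
      by (intro has_vector_derivative_mult bounded_linear.has_vector_derivative[OF bounded_linear_adj]
          Y x)
    moreover have "adj (Y x) * (G x * Y x) + adj (G x * Y x) * Y x = 0"
      by (simp add: adj_mult skew_adjoint[OF x] mult.assoc)
    ultimately show ?thesis
      by (simp add: has_vector_derivative_def)
  qed
  then have "\<exists>c. \<forall>x\<in>{0..T}. adj (Y x) * Y x = c"
    by (intro has_derivative_zero_constant) auto
  then obtain c where "\<forall>x\<in>{0..T}. adj (Y x) * Y x = c"
    by blast
  with assms(2,3) show ?thesis
    by simp
qed

lemma propagator_unitary:
  assumes "t \<in> {0..T}" "s \<in> {0..T}"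
  shows "U t s * adj (U t s) = 1"
proof (rule adj_mult_self_eq_1)
  have "adj (U t s) * U t s = adj (U s s) * U s s"
    using assms by (intro gram_constant propagator_derivative) auto
  then show "adj (U t s) * U t s = 1"
    by (simp add: propagator_diagonal[OF assms(2)] adj_one)
qed

lemma propagator_compose:
  assumes "t \<in> {0..T}" "s \<in> {0..T}" "r \<in> {0..T}"
  shows "U t s * U s r = U t r"
proof -
  define Y where "Y \<tau> = U \<tau> s * U s r - U \<tau> r" for \<tau>
  have "(Y has_vector_derivative G \<tau> * Y \<tau>) (at \<tau> within {0..T})" if "\<tau> \<in> {0..T}" for \<tau>
    unfolding Y_def right_diff_distrib mult.assoc[symmetric]
    by (intro has_vector_derivative_diff has_vector_derivative_mult_left propagator_derivative
        that assms)
  then have "adj (Y t) * Y t = adj (Y s) * Y s"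
    using assms by (intro gram_constant) auto
  also have "Y s = 0"
    by (simp add: Y_def propagator_diagonal[OF assms(2)])
  finally have "adj (Y t) * Y t = 0"
    by simp
  then have "Y t = 0"
    by (rule adj_mult_self_eq_0)
  then show ?thesis
    by (simp add: Y_def)
qed

lemma duhamel:
  assumes h: "0 \<le> h" "h \<le> T"
    and V: "\<And>s. s \<in> {0..h} \<Longrightarrow> (V has_vector_derivative G s * V s + R s) (at s within {0..h})"
  shows "((\<lambda>s. U h s * R s) has_integral V h - U h 0 * V 0) {0..h}"
proof -
  have sub: "{0..h} \<subseteq> {0..T}" and zero: "0 \<in> {0..T}"
    using h by auto
  define W where "W s = adj (U s 0) * V s" for s
  have "(W has_vector_derivative adj (U s 0) * R s) (at s within {0..h})" if s: "s \<in> {0..h}" for s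
  proof -
    have sT: "s \<in> {0..T}"
      using s sub by auto
    have "((\<lambda>s. U s 0) has_vector_derivative G s * U s 0) (at s within {0..h})"
      by (rule has_vector_derivative_within_subset[OF propagator_derivative[OF sT zero] sub])
    then have "(W has_vector_derivative
        adj (U s 0) * (G s * V s + R s) + adj (G s * U s 0) * V s) (at s within {0..h})"
      unfolding W_def
      by (intro has_vector_derivative_mult bounded_linear.has_vector_derivative[OF bounded_linear_adj]
          V s)
    also have "adj (U s 0) * (G s * V s + R s) + adj (G s * U s 0) * V s = adj (U s 0) * R s"
      by (simp add: adj_mult skew_adjoint[OF sT] algebra_simps)
    finally show ?thesis .
  qed
  then have "((\<lambda>s. adj (U s 0) * R s) has_integral W h - W 0) {0..h}"
    using h by (intro fundamental_theorem_of_calculus) auto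
  then have "((\<lambda>s. U h 0 * (adj (U s 0) * R s)) has_integral U h 0 * (W h - W 0)) {0..h}"
    by (rule has_integral_mult_right)
  moreover have "U h 0 * (W h - W 0) = V h - U h 0 * V 0"
  proof -
    have "U h 0 * adj (U h 0) = 1" "U 0 0 = 1"
      using h zero by (simp_all add: propagator_unitary propagator_diagonal)
    then show ?thesis
      by (simp add: W_def adj_one right_diff_distrib mult.assoc[symmetric])
  qed
  moreover have "U h 0 * (adj (U s 0) * R s) = U h s * R s" if "s \<in> {0..h}" for s
  proof -
    have sT: "s \<in> {0..T}" and hT: "h \<in> {0..T}"
      using that h by auto
    have "U h 0 * adj (U s 0) = U h s * (U s 0 * adj (U s 0))"
      using propagator_compose[OF hT sT zero] by (simp add: mult.assoc[symmetric])
    also have "\<dots> = U h s"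
      by (simp add: propagator_unitary[OF sT zero])
    finally show ?thesis
      by (simp add: mult.assoc[symmetric])
  qed
  ultimately show ?thesis
    using has_integral_eq[of "{0..h}" "\<lambda>s. U h 0 * (adj (U s 0) * R s)" "\<lambda>s. U h s * R s"]
    by simp
qed

end

section \<open>The second-order splitting\<close>

lemma has_real_derivative_half:
  fixes T :: real
  assumes x: "x \<in> {0..T}"
    and g: "\<And>y. y \<in> {0..T} \<Longrightarrow> (g has_real_derivative g' y) (at y within {0..T})"
  shows "((\<lambda>x. g (x/2)) has_real_derivative g' (x/2) / 2) (at x within {0..T})"
proof -
  have "(g has_real_derivative g' (x/2)) (at (x/2) within (\<lambda>x. x/2) ` {0..T})"
    by (rule has_field_derivative_subset[OF g]) (use x in auto)
  moreover have "((\<lambda>x. x/2) has_real_derivative 1/2) (at x within {0..T})"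
    by (auto intro!: derivative_eq_intros)
  ultimately have "(g \<circ> (\<lambda>x. x/2) has_real_derivative g' (x/2) * (1/2)) (at x within {0..T})"
    by (rule DERIV_image_chain)
  then show ?thesis
    by (simp add: o_def)
qed

lemma continuous_on_half:
  fixes T :: real
  assumes "continuous_on {0..T} g"
  shows "continuous_on {0..T} (\<lambda>x. g (x/2))"
  by (rule continuous_on_compose2[OF assms]) (auto intro!: continuous_intros)

locale two_term_hamiltonian =
  fixes H1 H2 :: "complex^'n::finite^'n"
    and f1 f2 f1' f2' :: "real \<Rightarrow> real"
    and T :: real
  assumes herm1: "hermitian H1" and herm2: "hermitian H2"
    and df1: "\<And>t. t \<in> {0..T} \<Longrightarrow> (f1 has_real_derivative f1' t) (at t within {0..T})"
    and df2: "\<And>t. t \<in> {0..T} \<Longrightarrow> (f2 has_real_derivative f2' t) (at t within {0..T})"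
    and cf1: "continuous_on {0..T} f1'"
    and cf2: "continuous_on {0..T} f2'"
begin

definition K1 :: "'n cmat" where "K1 = (- \<i>) *\<^sub>C Abs_cmat H1"
definition K2 :: "'n cmat" where "K2 = (- \<i>) *\<^sub>C Abs_cmat H2"

definition generator :: "real \<Rightarrow> 'n cmat" where
  "generator t = f1 t *\<^sub>R K1 + f2 t *\<^sub>R K2"

lemma adj_generator: "adj (generator t) = - generator t"
  by (simp add: generator_def K1_def K2_def adj_add adj_diff adj_uminus adj_scaleR adj_cscale
      adj_Abs_cmat herm1 herm2)

definition \<alpha> :: "real \<Rightarrow> real" where "\<alpha> x = integral {x/2..x} f1"
definition \<beta> :: "real \<Rightarrow> real" where "\<beta> x = integral {0..x} f2"
definition \<gamma> :: "real \<Rightarrow> real" where "\<gamma> x = integral {0..x/2} f1"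
definition \<alpha>' :: "real \<Rightarrow> real" where "\<alpha>' x = f1 x - f1 (x/2) / 2"
definition \<alpha>'' :: "real \<Rightarrow> real" where "\<alpha>'' x = f1' x - f1' (x/2) / 4"
definition \<gamma>' :: "real \<Rightarrow> real" where "\<gamma>' x = f1 (x/2) / 2"

definition splitting :: "real \<Rightarrow> 'n cmat" where
  "splitting x = exp (\<alpha> x *\<^sub>R K1) * exp (\<beta> x *\<^sub>R K2) * exp (\<gamma> x *\<^sub>R K1)"

definition defect :: "real \<Rightarrow> 'n cmat" where
  "defect x = \<gamma>' x *\<^sub>R (Ad (\<beta> x *\<^sub>R K2) K1 - K1) + f2 x *\<^sub>R (K2 - Ad (- (\<alpha> x *\<^sub>R K1)) K2)"

lemma continuous_f1: "continuous_on {0..T} f1"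
  by (rule DERIV_continuous_on[OF df1])

lemma continuous_f2: "continuous_on {0..T} f2"
  by (rule DERIV_continuous_on[OF df2])

lemma antiderivative_f1: "x \<in> {0..T} \<Longrightarrow>
    ((\<lambda>x. integral {0..x} f1) has_real_derivative f1 x) (at x within {0..T})"
  by (rule integral_has_real_derivative[OF continuous_f1])

lemma \<alpha>_derivative: "x \<in> {0..T} \<Longrightarrow> (\<alpha> has_real_derivative \<alpha>' x) (at x within {0..T})"
proof -
  assume x: "x \<in> {0..T}"
  have difference: "((\<lambda>x. integral {0..x} f1 - integral {0..x/2} f1) has_real_derivative \<alpha>' x)
      (at x within {0..T})"
    unfolding \<alpha>'_def
    by (intro DERIV_diff antiderivative_f1 x has_real_derivative_half[OF x antiderivative_f1])
  have "integral {0..y} f1 - integral {0..y/2} f1 = \<alpha> y" if "y \<in> {0..T}" for y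
  proof -
    have "f1 integrable_on {0..y}"
      using that by (intro integrable_continuous_interval continuous_on_subset[OF continuous_f1]) auto
    then have "integral {0..y/2} f1 + integral {y/2..y} f1 = integral {0..y} f1"
      using that by (intro Henstock_Kurzweil_Integration.integral_combine) auto
    then show ?thesis
      by (simp add: \<alpha>_def)
  qed
  then show ?thesis
    by (intro has_field_derivative_transform_within[OF difference _ x, where d = 1]) auto
qed

lemma \<alpha>'_derivative: "x \<in> {0..T} \<Longrightarrow> (\<alpha>' has_real_derivative \<alpha>'' x) (at x within {0..T})"
proof -
  assume x: "x \<in> {0..T}"
  have "((\<lambda>x. f1 x - f1 (x/2) / 2) has_real_derivative f1' x - (f1' (x/2) / 2) / 2) (at x within {0..T})"
    by (intro DERIV_diff DERIV_cdivide df1 x has_real_derivative_half[OF x df1])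
  then show ?thesis
    by (simp add: \<alpha>'_def[abs_def] \<alpha>''_def)
qed

lemma \<beta>_derivative: "x \<in> {0..T} \<Longrightarrow> (\<beta> has_real_derivative f2 x) (at x within {0..T})"
  unfolding \<beta>_def[abs_def] by (rule integral_has_real_derivative[OF continuous_f2])

lemma \<gamma>_derivative: "x \<in> {0..T} \<Longrightarrow> (\<gamma> has_real_derivative \<gamma>' x) (at x within {0..T})"
  unfolding \<gamma>_def[abs_def] \<gamma>'_def by (rule has_real_derivative_half[OF _ antiderivative_f1])

lemma splitting_derivative:
  assumes "x \<in> {0..T}"
  shows "(splitting has_vector_derivative generator x * splitting x
      + exp (\<alpha> x *\<^sub>R K1) * defect x * exp (\<beta> x *\<^sub>R K2) * exp (\<gamma> x *\<^sub>R K1)) (at x within {0..T})"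
  using has_vector_derivative_symmetric_exp_product
      [OF \<alpha>_derivative[OF assms] \<beta>_derivative[OF assms] \<gamma>_derivative[OF assms], of K1 K2]
  by (simp add: splitting_def[abs_def] generator_def defect_def \<alpha>'_def \<gamma>'_def)

lemma splitting_0: "splitting 0 = 1"
  by (simp add: splitting_def \<alpha>_def \<beta>_def \<gamma>_def)

lemma integral_f2'_eq: "x \<in> {0..T} \<Longrightarrow> integral {0..x} f2' = f2 x - f2 0"
proof -
  assume x: "x \<in> {0..T}"
  have "(f2' has_integral f2 x - f2 0) {0..x}"
  proof (rule fundamental_theorem_of_calculus)
    fix u assume "u \<in> {0..x}"
    then have "(f2 has_real_derivative f2' u) (at u within {0..x})"
      using x by (intro has_field_derivative_subset[OF df2]) auto
    then show "(f2 has_vector_derivative f2' u) (at u within {0..x})"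
      by (simp add: has_real_derivative_iff_has_vector_derivative)
  qed (use x in auto)
  then show ?thesis
    by (rule integral_unique)
qed

lemma integral_f1'_half: "x \<in> {0..T} \<Longrightarrow> integral {0..x} (\<lambda>s. f1' (s/2)) = 2 * (f1 (x/2) - f1 0)"
proof -
  assume x: "x \<in> {0..T}"
  have "((\<lambda>s. f1' (s/2)) has_integral 2 * f1 (x/2) - 2 * f1 (0/2)) {0..x}"
  proof (rule fundamental_theorem_of_calculus)
    fix u assume u: "u \<in> {0..x}"
    then have "((\<lambda>s. f1 (s/2)) has_real_derivative f1' (u/2) / 2) (at u within {0..T})"
      using x by (intro has_real_derivative_half[OF _ df1]) auto
    from DERIV_cmult[OF this, of 2]
    have "((\<lambda>s. 2 * f1 (s/2)) has_real_derivative f1' (u/2)) (at u within {0..T})"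
      by simp
    then have "((\<lambda>s. 2 * f1 (s/2)) has_real_derivative f1' (u/2)) (at u within {0..x})"
      by (rule has_field_derivative_subset) (use x in auto)
    then show "((\<lambda>s. 2 * f1 (s/2)) has_vector_derivative f1' (u/2)) (at u within {0..x})"
      by (simp add: has_real_derivative_iff_has_vector_derivative)
  qed (use x in auto)
  then show ?thesis
    by (simp add: integral_unique right_diff_distrib)
qed

lemma continuous_\<alpha>'': "continuous_on {0..T} \<alpha>''"
  unfolding \<alpha>''_def[abs_def] using continuous_on_half[OF cf1] by (intro continuous_intros cf1) auto

lemma phase_K1: "(\<i> * of_real a) *\<^sub>C Abs_cmat H1 = - (a *\<^sub>R K1)"
  by (simp add: K1_def)

lemma phase_K2: "(- \<i> * of_real a) *\<^sub>C Abs_cmat H2 = a *\<^sub>R K2"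
  by (simp add: K2_def)

lemma Ad_K1_K2_expansion:
  assumes x: "x \<in> {0..T}"
  shows "Ad (- (\<alpha> x *\<^sub>R K1)) K2 = K2 + (x * f1 0 / 2) *\<^sub>R bracket (Abs_cmat H1) (Abs_cmat H2)
    + integral {0..x} (\<lambda>u. (\<alpha>'' u * (x - u)) *\<^sub>R
        Ad (- (\<alpha> u *\<^sub>R K1)) (bracket (Abs_cmat H1) (Abs_cmat H2)))
    + \<i> *\<^sub>C integral {0..x} (\<lambda>u. ((\<alpha>' u)\<^sup>2 * (x - u)) *\<^sub>R
        Ad (- (\<alpha> u *\<^sub>R K1)) (bracket (Abs_cmat H1) (bracket (Abs_cmat H1) (Abs_cmat H2))))"
proof -
  have sub: "{0..x} \<subseteq> {0..T}"
    using x by auto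
  have "Ad ((- \<alpha> x) *\<^sub>R K1) K2 = K2 + (x * - \<alpha>' 0) *\<^sub>R bracket K1 K2
    + integral {0..x} (\<lambda>u. (- \<alpha>'' u * (x - u)) *\<^sub>R Ad ((- \<alpha> u) *\<^sub>R K1) (bracket K1 K2))
    + integral {0..x} (\<lambda>u. ((- \<alpha>' u)\<^sup>2 * (x - u)) *\<^sub>R
        Ad ((- \<alpha> u) *\<^sub>R K1) (bracket K1 (bracket K1 K2)))"
  proof (rule Ad_taylor_expansion
      [where \<phi> = "\<lambda>u. - \<alpha> u" and \<phi>' = "\<lambda>u. - \<alpha>' u" and \<phi>'' = "\<lambda>u. - \<alpha>'' u"])
    fix u assume "u \<in> {0..x}"
    then have u: "u \<in> {0..T}"
      using sub by auto
    show "((\<lambda>u. - \<alpha> u) has_real_derivative - \<alpha>' u) (at u within {0..x})"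
      by (intro DERIV_minus has_field_derivative_subset[OF \<alpha>_derivative[OF u] sub])
    show "((\<lambda>u. - \<alpha>' u) has_real_derivative - \<alpha>'' u) (at u within {0..x})"
      by (intro DERIV_minus has_field_derivative_subset[OF \<alpha>'_derivative[OF u] sub])
  next
    show "continuous_on {0..x} (\<lambda>u. - \<alpha>'' u)"
      by (intro continuous_intros continuous_on_subset[OF continuous_\<alpha>'' sub])
  qed (use x in \<open>auto simp: \<alpha>_def\<close>)
  then show ?thesis
    by (simp add: K1_def K2_def \<alpha>'_def[of 0] power2_minus Ad_minus_right)
qed

lemma Ad_K2_K1_expansion:
  assumes x: "x \<in> {0..T}"
  shows "Ad (\<beta> x *\<^sub>R K2) K1 = K1 + (x * f2 0) *\<^sub>R bracket (Abs_cmat H1) (Abs_cmat H2)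
    + integral {0..x} (\<lambda>u. (f2' u * (x - u)) *\<^sub>R Ad (\<beta> u *\<^sub>R K2) (bracket (Abs_cmat H1) (Abs_cmat H2)))
    + \<i> *\<^sub>C integral {0..x} (\<lambda>u. ((f2 u)\<^sup>2 * (x - u)) *\<^sub>R
        Ad (\<beta> u *\<^sub>R K2) (bracket (Abs_cmat H2) (bracket (Abs_cmat H2) (Abs_cmat H1))))"
proof -
  have sub: "{0..x} \<subseteq> {0..T}"
    using x by auto
  have "Ad (\<beta> x *\<^sub>R K2) K1 = K1 + (x * f2 0) *\<^sub>R bracket K2 K1
    + integral {0..x} (\<lambda>u. (f2' u * (x - u)) *\<^sub>R Ad (\<beta> u *\<^sub>R K2) (bracket K2 K1))
    + integral {0..x} (\<lambda>u. ((f2 u)\<^sup>2 * (x - u)) *\<^sub>R Ad (\<beta> u *\<^sub>R K2) (bracket K2 (bracket K2 K1)))"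
  proof (rule Ad_taylor_expansion)
    fix u assume "u \<in> {0..x}"
    then have u: "u \<in> {0..T}"
      using sub by auto
    show "(\<beta> has_real_derivative f2 u) (at u within {0..x})"
      by (rule has_field_derivative_subset[OF \<beta>_derivative[OF u] sub])
    show "(f2 has_real_derivative f2' u) (at u within {0..x})"
      by (rule has_field_derivative_subset[OF df2[OF u] sub])
  next
    show "continuous_on {0..x} f2'"
      by (rule continuous_on_subset[OF cf2 sub])
  qed (use x in \<open>auto simp: \<beta>_def\<close>)
  then show ?thesis
    using bracket_swap[of "Abs_cmat H2" "Abs_cmat H1"] by (simp add: K1_def K2_def Ad_minus_right)
qed

lemma Abs_Eg2:
  assumes x: "x \<in> {0..T}"
  shows "Abs_cmat (Eg2 H1 H2 f1 f2 f1' f2' x) = defect x"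
proof -
  define C where "C = bracket (Abs_cmat H1) (Abs_cmat H2)"
  define I1 where "I1 = integral {0..x} (\<lambda>u. (\<alpha>'' u * (x - u)) *\<^sub>R Ad (- (\<alpha> u *\<^sub>R K1)) C)"
  define I2 where "I2 = integral {0..x} (\<lambda>u. (f2' u * (x - u)) *\<^sub>R Ad (\<beta> u *\<^sub>R K2) C)"
  define J1 where "J1 = integral {0..x} (\<lambda>u. ((\<alpha>' u)\<^sup>2 * (x - u)) *\<^sub>R
    Ad (- (\<alpha> u *\<^sub>R K1)) (bracket (Abs_cmat H1) C))"
  define J2 where "J2 = integral {0..x} (\<lambda>u. ((f2 u)\<^sup>2 * (x - u)) *\<^sub>R
    Ad (\<beta> u *\<^sub>R K2) (bracket (Abs_cmat H2) (bracket (Abs_cmat H2) (Abs_cmat H1))))"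
  have expansion1: "Ad (- (\<alpha> x *\<^sub>R K1)) K2 = K2 + (x * f1 0 / 2) *\<^sub>R C + I1 + \<i> *\<^sub>C J1"
    unfolding C_def I1_def J1_def by (rule Ad_K1_K2_expansion[OF x])
  have expansion2: "Ad (\<beta> x *\<^sub>R K2) K1 = K1 + (x * f2 0) *\<^sub>R C + I2 + \<i> *\<^sub>C J2"
    unfolding C_def I2_def J2_def by (rule Ad_K2_K1_expansion[OF x])
  have half: "(c / 2) *\<^sub>C A = (1/2) *\<^sub>R (c *\<^sub>C A)" for c and A :: "'n cmat"
  proof -
    have "c * of_real (1/2) = c / 2"
      by simp
    then show ?thesis
      using cscale_mult_of_real[of c "1/2" A] by (simp only: cscale_scaleR)
  qed
  have Eg2: "Abs_cmat (Eg2 H1 H2 f1 f2 f1' f2' x) =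
      (- (x/2) * f1 0 * (f2 x - f2 0)) *\<^sub>R C + (x/4 * f2 0 * (2 * (f1 (x/2) - f1 0))) *\<^sub>R C
      - f2 x *\<^sub>R I1 + \<gamma>' x *\<^sub>R I2 - f2 x *\<^sub>R (\<i> *\<^sub>C J1) + \<gamma>' x *\<^sub>R (\<i> *\<^sub>C J2)"
    unfolding Eg2_def integral_f2'_eq[OF x] integral_f1'_half[OF x]
    by (simp only: Abs_cmat_simps cscale_of_real phase_K1 phase_K2 \<alpha>_def[symmetric]
        \<beta>_def[symmetric] C_def[symmetric])
       (simp add: I1_def I2_def J1_def J2_def \<alpha>'_def \<alpha>''_def \<gamma>'_def half)
  have coefficient: "(- (x/2) * f1 0 * (f2 x - f2 0)) *\<^sub>R C + (x/4 * f2 0 * (2 * (f1 (x/2) - f1 0))) *\<^sub>R C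
      = (\<gamma>' x * (x * f2 0) - f2 x * (x * f1 0 / 2)) *\<^sub>R C"
    unfolding scaleR_left_distrib[symmetric] by (simp add: \<gamma>'_def field_simps)
  show ?thesis
    unfolding Eg2 coefficient defect_def expansion1 expansion2 by (simp add: algebra_simps)
qed

lemma Abs_cmat_Ug2: "Abs_cmat (Ug2 H1 H2 f1 f2 h) = splitting h"
  by (simp add: Ug2_def splitting_def Abs_cmat_simps K1_def K2_def \<alpha>_def \<beta>_def \<gamma>_def)

lemma Abs_cmat_defect_term:
  assumes "s \<in> {0..T}"
  shows "Abs_cmat (M
      ** mexp ((- \<i> * complex_of_real (integral {s/2..s} f1)) *\<^sub>M H1)
      ** Eg2 H1 H2 f1 f2 f1' f2' s
      ** mexp ((- \<i> * complex_of_real (integral {0..s} f2)) *\<^sub>M H2)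
      ** mexp ((- \<i> * complex_of_real (integral {0..s/2} f1)) *\<^sub>M H1))
    = Abs_cmat M * (exp (\<alpha> s *\<^sub>R K1) * defect s * exp (\<beta> s *\<^sub>R K2) * exp (\<gamma> s *\<^sub>R K1))"
  by (simp add: Abs_cmat_simps K1_def K2_def \<alpha>_def \<beta>_def \<gamma>_def Abs_Eg2[OF assms] mult.assoc)

lemma Abs_cmat_hamiltonian:
  "Abs_cmat ((- \<i>) *\<^sub>M ((complex_of_real (f1 t) *\<^sub>M H1 + complex_of_real (f2 t) *\<^sub>M H2) ** M))
    = generator t * Abs_cmat M"
  by (simp add: Abs_cmat_simps generator_def K1_def K2_def algebra_simps cscale_add_right)

end

theorem lemma6:
  fixes H1 H2 :: "complex^'n^'n"
    and f1 f2 f1' f2' :: "real \<Rightarrow> real"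
    and T h :: real
    and U :: "real \<Rightarrow> real \<Rightarrow> complex^'n^'n"
  assumes herm1: "hermitian H1" and herm2: "hermitian H2"
    and df1: "\<And>t. t \<in> {0..T} \<Longrightarrow> (f1 has_real_derivative f1' t) (at t within {0..T})"
    and df2: "\<And>t. t \<in> {0..T} \<Longrightarrow> (f2 has_real_derivative f2' t) (at t within {0..T})"
    and cf1: "continuous_on {0..T} f1'"
    and cf2: "continuous_on {0..T} f2'"
    and U_ode: "\<And>t s. t \<in> {0..T} \<Longrightarrow> s \<in> {0..T} \<Longrightarrow>
        ((\<lambda>\<tau>. U \<tau> s) has_vector_derivative
           ((- \<i>) *\<^sub>M ((complex_of_real (f1 t) *\<^sub>M H1 + complex_of_real (f2 t) *\<^sub>M H2) ** U t s)))
        (at t within {0..T})"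
    and U_init: "\<And>s. s \<in> {0..T} \<Longrightarrow> U s s = mat 1"
    and h: "0 < h" "h \<le> T"
  shows "Ug2 H1 H2 f1 f2 h - U h 0 =
    integral {0..h} (\<lambda>s. U h s
       ** mexp ((- \<i> * complex_of_real (integral {s/2..s} f1)) *\<^sub>M H1)
       ** Eg2 H1 H2 f1 f2 f1' f2' s
       ** mexp ((- \<i> * complex_of_real (integral {0..s} f2)) *\<^sub>M H2)
       ** mexp ((- \<i> * complex_of_real (integral {0..s/2} f1)) *\<^sub>M H1))"
proof -
  interpret two_term_hamiltonian H1 H2 f1 f2 f1' f2' T
    using herm1 herm2 df1 df2 cf1 cf2 by unfold_locales
  interpret unitary_propagator generator T "\<lambda>t s. Abs_cmat (U t s)"
  proof
    fix t s
    assume "t \<in> {0..T}" "s \<in> {0..T}"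
    from bounded_linear.has_vector_derivative[OF bounded_linear_Abs_cmat U_ode[OF this]]
    show "((\<lambda>\<tau>. Abs_cmat (U \<tau> s)) has_vector_derivative generator t * Abs_cmat (U t s))
        (at t within {0..T})"
      by (simp only: Abs_cmat_hamiltonian)
  qed (simp_all add: adj_generator U_init Abs_cmat_one)
  have sub: "{0..h} \<subseteq> {0..T}"
    using h by auto
  have "((\<lambda>s. Abs_cmat (U h s)
        * (exp (\<alpha> s *\<^sub>R K1) * defect s * exp (\<beta> s *\<^sub>R K2) * exp (\<gamma> s *\<^sub>R K1)))
      has_integral splitting h - Abs_cmat (U h 0)) {0..h}"
    using duhamel[of h splitting] h splitting_0
      has_vector_derivative_within_subset[OF splitting_derivative sub] sub
    by (auto simp: mult.assoc)
  then have "Abs_cmat (Ug2 H1 H2 f1 f2 h - U h 0) = integral {0..h} (\<lambda>s. Abs_cmat (U h s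
       ** mexp ((- \<i> * complex_of_real (integral {s/2..s} f1)) *\<^sub>M H1)
       ** Eg2 H1 H2 f1 f2 f1' f2' s
       ** mexp ((- \<i> * complex_of_real (integral {0..s} f2)) *\<^sub>M H2)
       ** mexp ((- \<i> * complex_of_real (integral {0..s/2} f1)) *\<^sub>M H1)))"
    unfolding Abs_cmat_diff Abs_cmat_Ug2
    by (rule integral_unique[symmetric, THEN trans],
        intro integral_cong Abs_cmat_defect_term[symmetric]) (use sub in auto)
  then show ?thesis
    unfolding Abs_cmat_integral[symmetric] Abs_cmat_inject[OF UNIV_I UNIV_I] .
qed

end
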